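(* Let $\{X_k(m): m\in\mathbb{R}_+,\ k\in\mathbb{N}\}$ be a family of integrable real random variables on a probability space $(\Omega,\mathcal F,\mathbb P)$ that are independent in $k$. Assume: (C) $\mathbb{E}[X_k(m)]=0$ for all $m\in\mathbb{R}_+$, $k\in\mathbb{N}$; (W1) for every $\varepsilon>0$, $\lim_{m\to\infty}\sup_k \mathbb{P}(|X_k(m)|>\varepsilon)=0$; (W2) $\lim_{A\to\infty}\sup_{k,m}\mathbb{E}\big[|X_k(m)|\mathbf 1_{\{|X_k(m)|>A\}}\big]=0$. Then for every sequence $\mathbf m=(m_k)_{k\in\mathbb N}$ of positive reals with $\sum_{k}m_k=\infty$, setting $M_n=\sum_{k=1}^n m_k$ and $S_n=\sum_{k=1}^n \frac{m_k}{M_n}X_k(m_k)$, we have $\lim_{n\to\infty}\mathbb{P}(|S_n|>\varepsilon)=0$ for every $\varepsilon>0$.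
   Context: $\mathbb{R}_+$ denotes the positive reals. "Independent in $k$" means that the families $\{X_k(m): m\in\mathbb{R}_+\}$ for different $k$ are independent. *)

theory Defs
  imports "HOL-Probability.Probability"
begin

end

(* Truncate every summand at a level A supplied by (W2), splitting it into a bounded centred
   part and a centred tail.  The tails have uniformly small L1 norm, so Markov's inequality
   disposes of their weighted average.  The bounded parts are independent and centred, so
   Chebyshev's inequality applies, with variance at most delta^2 + A^2 P(|X_k(m_k)| > delta).
   In the weighted sum of these variances the terms with m_k >= R are small by (W1), and the
   terms with m_k < R have (m_k/M_n)^2 <= (m_k/M_n) R/M_n, so together they contribute at most
   R/M_n, which tends to 0 as M_n diverges. *)

theory Submission
  imports Defs
begin

lemma integrable_mult_of_square_integrable:
  fixes f g :: "'a \<Rightarrow> real"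
  assumes [measurable]: "f \<in> borel_measurable M" "g \<in> borel_measurable M"
    and "integrable M (\<lambda>\<omega>. (f \<omega>)\<^sup>2)" "integrable M (\<lambda>\<omega>. (g \<omega>)\<^sup>2)"
  shows "integrable M (\<lambda>\<omega>. f \<omega> * g \<omega>)"
proof (rule Bochner_Integration.integrable_bound)
  show "integrable M (\<lambda>\<omega>. (f \<omega>)\<^sup>2 + (g \<omega>)\<^sup>2)"
    using assms(3,4) by simp
  show "AE \<omega> in M. norm (f \<omega> * g \<omega>) \<le> norm ((f \<omega>)\<^sup>2 + (g \<omega>)\<^sup>2)"
  proof (intro AE_I2)
    fix \<omega>
    have "2 * \<bar>f \<omega>\<bar> * \<bar>g \<omega>\<bar> \<le> \<bar>f \<omega>\<bar>\<^sup>2 + \<bar>g \<omega>\<bar>\<^sup>2"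
      by (rule sum_squares_bound)
    moreover have "0 \<le> \<bar>f \<omega>\<bar> * \<bar>g \<omega>\<bar>"
      by simp
    ultimately show "norm (f \<omega> * g \<omega>) \<le> norm ((f \<omega>)\<^sup>2 + (g \<omega>)\<^sup>2)"
      unfolding real_norm_def abs_mult power2_abs by linarith
  qed
qed simp

lemma (in prob_space) expectation_square_sum_indep:
  fixes T :: "'i \<Rightarrow> 'a \<Rightarrow> real"
  assumes fin: "finite I" and indep: "indep_vars (\<lambda>_. borel) T I"
    and sq_int: "\<And>i. i \<in> I \<Longrightarrow> integrable M (\<lambda>\<omega>. (T i \<omega>)\<^sup>2)"
    and mean: "\<And>i. i \<in> I \<Longrightarrow> expectation (T i) = 0"
  shows "integrable M (\<lambda>\<omega>. (\<Sum>i\<in>I. c i * T i \<omega>)\<^sup>2)"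
    and "expectation (\<lambda>\<omega>. (\<Sum>i\<in>I. c i * T i \<omega>)\<^sup>2)
           = (\<Sum>i\<in>I. (c i)\<^sup>2 * expectation (\<lambda>\<omega>. (T i \<omega>)\<^sup>2))"
proof -
  have meas[measurable]: "T i \<in> borel_measurable M" if "i \<in> I" for i
    using indep that unfolding indep_vars_def by auto
  have int_prod: "integrable M (\<lambda>\<omega>. T i \<omega> * T j \<omega>)" if "i \<in> I" "j \<in> I" for i j
    using that by (intro integrable_mult_of_square_integrable sq_int meas)
  have uncorrelated: "expectation (\<lambda>\<omega>. T i \<omega> * T j \<omega>) = 0" if "i \<in> I" "j \<in> I" "i \<noteq> j" for i j
  proof -
    have "expectation (\<lambda>\<omega>. \<Prod>k\<in>{i,j}. T k \<omega>) = (\<Prod>k\<in>{i,j}. expectation (T k))"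
      using that by (intro indep_vars_lebesgue_integral indep_vars_subset[OF indep]
          square_integrable_imp_integrable[OF meas sq_int]) auto
    then show ?thesis
      using that mean by simp
  qed
  have square_eq: "(\<lambda>\<omega>. (\<Sum>i\<in>I. c i * T i \<omega>)\<^sup>2)
      = (\<lambda>\<omega>. \<Sum>i\<in>I. \<Sum>j\<in>I. c i * c j * (T i \<omega> * T j \<omega>))"
    by (auto simp: power2_eq_square sum_product intro!: sum.cong)
  show "integrable M (\<lambda>\<omega>. (\<Sum>i\<in>I. c i * T i \<omega>)\<^sup>2)"
    unfolding square_eq using int_prod by auto
  have "expectation (\<lambda>\<omega>. (\<Sum>i\<in>I. c i * T i \<omega>)\<^sup>2)
      = (\<Sum>i\<in>I. \<Sum>j\<in>I. c i * c j * expectation (\<lambda>\<omega>. T i \<omega> * T j \<omega>))"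
    unfolding square_eq using int_prod by (simp add: integrable_sum)
  also have "\<dots> = (\<Sum>i\<in>I. \<Sum>j\<in>I. if i = j then c i * c j * expectation (\<lambda>\<omega>. T i \<omega> * T j \<omega>) else 0)"
    by (intro sum.cong refl) (simp add: uncorrelated)
  also have "\<dots> = (\<Sum>i\<in>I. c i * c i * expectation (\<lambda>\<omega>. T i \<omega> * T i \<omega>))"
    using fin by simp
  finally show "expectation (\<lambda>\<omega>. (\<Sum>i\<in>I. c i * T i \<omega>)\<^sup>2)
           = (\<Sum>i\<in>I. (c i)\<^sup>2 * expectation (\<lambda>\<omega>. (T i \<omega>)\<^sup>2))"
    by (simp add: power2_eq_square)
qed

lemma (in prob_space) prob_abs_sum_indep_ge_le:
  fixes T :: "'i \<Rightarrow> 'a \<Rightarrow> real"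
  assumes "finite I" and indep: "indep_vars (\<lambda>_. borel) T I"
    and "\<And>i. i \<in> I \<Longrightarrow> integrable M (\<lambda>\<omega>. (T i \<omega>)\<^sup>2)"
    and "\<And>i. i \<in> I \<Longrightarrow> expectation (T i) = 0"
    and "0 < a"
  shows "prob {\<omega>\<in>space M. a \<le> \<bar>\<Sum>i\<in>I. c i * T i \<omega>\<bar>}
           \<le> (\<Sum>i\<in>I. (c i)\<^sup>2 * expectation (\<lambda>\<omega>. (T i \<omega>)\<^sup>2)) / a\<^sup>2"
proof -
  have [measurable]: "T i \<in> borel_measurable M" if "i \<in> I" for i
    using indep that unfolding indep_vars_def by auto
  show ?thesis
    using second_moment_method[of "\<lambda>\<omega>. \<Sum>i\<in>I. c i * T i \<omega>" a]
      expectation_square_sum_indep[OF assms(1-4)] \<open>0 < a\<close>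
    by simp
qed

lemma (in prob_space) prob_abs_sum_ge_le:
  fixes V :: "'i \<Rightarrow> 'a \<Rightarrow> real"
  assumes "\<And>i. i \<in> I \<Longrightarrow> integrable M (V i)" and "0 < a"
  shows "prob {\<omega>\<in>space M. a \<le> \<bar>\<Sum>i\<in>I. w i * V i \<omega>\<bar>}
           \<le> (\<Sum>i\<in>I. \<bar>w i\<bar> * expectation (\<lambda>\<omega>. \<bar>V i \<omega>\<bar>)) / a"
proof -
  have "prob {\<omega>\<in>space M. a \<le> \<bar>\<Sum>i\<in>I. w i * V i \<omega>\<bar>}
      \<le> expectation (\<lambda>\<omega>. \<bar>\<Sum>i\<in>I. w i * V i \<omega>\<bar>) / a"
    using assms by (intro integral_Markov_inequality_measure[where A="space M"]) auto
  also have "expectation (\<lambda>\<omega>. \<bar>\<Sum>i\<in>I. w i * V i \<omega>\<bar>)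
      \<le> expectation (\<lambda>\<omega>. \<Sum>i\<in>I. \<bar>w i\<bar> * \<bar>V i \<omega>\<bar>)"
    using assms by (intro integral_mono order.trans[OF sum_abs]) (auto simp: abs_mult)
  also have "\<dots> = (\<Sum>i\<in>I. \<bar>w i\<bar> * expectation (\<lambda>\<omega>. \<bar>V i \<omega>\<bar>))"
    using assms by (simp add: integral_sum)
  finally show ?thesis
    using \<open>0 < a\<close> by (simp add: divide_right_mono)
qed

lemma (in finite_measure) measure_abs_add_gt_le:
  fixes X Y :: "'a \<Rightarrow> real"
  assumes [measurable]: "X \<in> borel_measurable M" "Y \<in> borel_measurable M" and "a + b \<le> \<epsilon>"
  shows "measure M {\<omega>\<in>space M. \<epsilon> < \<bar>X \<omega> + Y \<omega>\<bar>}
           \<le> measure M {\<omega>\<in>space M. a \<le> \<bar>X \<omega>\<bar>} + measure M {\<omega>\<in>space M. b \<le> \<bar>Y \<omega>\<bar>}"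
proof -
  have "{\<omega>\<in>space M. \<epsilon> < \<bar>X \<omega> + Y \<omega>\<bar>}
      \<subseteq> {\<omega>\<in>space M. a \<le> \<bar>X \<omega>\<bar>} \<union> {\<omega>\<in>space M. b \<le> \<bar>Y \<omega>\<bar>}"
    using abs_triangle_ineq \<open>a + b \<le> \<epsilon>\<close> by fastforce
  then have "measure M {\<omega>\<in>space M. \<epsilon> < \<bar>X \<omega> + Y \<omega>\<bar>}
      \<le> measure M ({\<omega>\<in>space M. a \<le> \<bar>X \<omega>\<bar>} \<union> {\<omega>\<in>space M. b \<le> \<bar>Y \<omega>\<bar>})"
    by (intro finite_measure_mono) auto
  also have "\<dots> \<le> measure M {\<omega>\<in>space M. a \<le> \<bar>X \<omega>\<bar>} + measure M {\<omega>\<in>space M. b \<le> \<bar>Y \<omega>\<bar>}"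
    by (intro measure_Un_le) auto
  finally show ?thesis .
qed

lemma (in prob_space) expectation_abs_centered_le:
  fixes U :: "'a \<Rightarrow> real"
  assumes "integrable M U"
  shows "expectation (\<lambda>\<omega>. \<bar>U \<omega> - expectation U\<bar>) \<le> 2 * expectation (\<lambda>\<omega>. \<bar>U \<omega>\<bar>)"
proof -
  have "expectation (\<lambda>\<omega>. \<bar>U \<omega> - expectation U\<bar>) \<le> expectation (\<lambda>\<omega>. \<bar>U \<omega>\<bar> + \<bar>expectation U\<bar>)"
    using assms by (intro integral_mono) auto
  also have "\<dots> = expectation (\<lambda>\<omega>. \<bar>U \<omega>\<bar>) + \<bar>expectation U\<bar>"
    using assms by (simp add: prob_space)
  also have "\<dots> \<le> 2 * expectation (\<lambda>\<omega>. \<bar>U \<omega>\<bar>)"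
    using integral_abs_bound[of M U] by simp
  finally show ?thesis .
qed

definition truncate_at :: "real \<Rightarrow> real \<Rightarrow> real" where
  "truncate_at A x = (if \<bar>x\<bar> \<le> A then x else 0)"

lemma borel_measurable_truncate_at [measurable]: "truncate_at A \<in> borel_measurable borel"
  unfolding truncate_at_def by measurable

lemma square_truncate_at_le: "(truncate_at A x)\<^sup>2 \<le> A\<^sup>2"
  by (auto simp: truncate_at_def abs_le_square_iff[symmetric])

lemma abs_diff_truncate_at: "\<bar>x - truncate_at A x\<bar> = \<bar>x\<bar> * indicator {x. A < \<bar>x\<bar>} x"
  by (simp add: truncate_at_def indicator_def)

lemma (in finite_measure) integrable_square_truncate_at:
  assumes [measurable]: "Z \<in> borel_measurable M"
  shows "integrable M (\<lambda>\<omega>. (truncate_at A (Z \<omega>))\<^sup>2)"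
  by (rule integrable_const_bound[where B="A\<^sup>2"]) (simp_all add: square_truncate_at_le)

lemma (in finite_measure) integrable_truncate_at:
  assumes [measurable]: "Z \<in> borel_measurable M"
  shows "integrable M (\<lambda>\<omega>. truncate_at A (Z \<omega>))"
  by (rule square_integrable_imp_integrable[OF _ integrable_square_truncate_at]) simp_all

lemma (in prob_space) variance_truncate_at_le:
  fixes Z :: "'a \<Rightarrow> real"
  assumes [measurable]: "random_variable borel Z"
  shows "variance (\<lambda>\<omega>. truncate_at A (Z \<omega>)) \<le> \<delta>\<^sup>2 + A\<^sup>2 * prob {\<omega>\<in>space M. \<delta> < \<bar>Z \<omega>\<bar>}"
proof -
  let ?B = "\<lambda>\<omega>. truncate_at A (Z \<omega>)"
  let ?S = "{\<omega>\<in>space M. \<delta> < \<bar>Z \<omega>\<bar>}"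
  have [measurable]: "?S \<in> sets M"
    by measurable
  have int_sq: "integrable M (\<lambda>\<omega>. (?B \<omega>)\<^sup>2)"
    by (rule integrable_square_truncate_at) simp
  have "variance ?B \<le> expectation (\<lambda>\<omega>. (?B \<omega>)\<^sup>2)"
    using square_integrable_imp_integrable[OF _ int_sq] int_sq by (simp add: variance_eq)
  also have "\<dots> \<le> expectation (\<lambda>\<omega>. \<delta>\<^sup>2 + A\<^sup>2 * indicator ?S \<omega>)"
  proof (rule integral_mono[OF int_sq])
    show "integrable M (\<lambda>\<omega>. \<delta>\<^sup>2 + A\<^sup>2 * indicator ?S \<omega>)"
      by (simp add: emeasure_eq_measure)
    show "(?B \<omega>)\<^sup>2 \<le> \<delta>\<^sup>2 + A\<^sup>2 * indicator ?S \<omega>" if "\<omega> \<in> space M" for \<omega>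
    proof (cases "\<delta> < \<bar>Z \<omega>\<bar>")
      case True
      then show ?thesis
        using that square_truncate_at_le[of A "Z \<omega>"] by (simp add: add_increasing)
    next
      case False
      then show ?thesis
        by (auto simp: truncate_at_def abs_le_square_iff[symmetric])
    qed
  qed
  also have "\<dots> = \<delta>\<^sup>2 + A\<^sup>2 * prob ?S"
    by (simp add: prob_space emeasure_eq_measure)
  finally show ?thesis .
qed

lemma (in prob_space) prob_abs_sum_centered_truncation_ge_le:
  fixes Z :: "'i \<Rightarrow> 'a \<Rightarrow> real" and A :: real
  assumes "finite I" and indep: "indep_vars (\<lambda>_. borel) Z I" and "0 < a"
  defines "T \<equiv> \<lambda>i \<omega>. truncate_at A (Z i \<omega>) - expectation (\<lambda>\<omega>. truncate_at A (Z i \<omega>))"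
  shows "prob {\<omega>\<in>space M. a \<le> \<bar>\<Sum>i\<in>I. w i * T i \<omega>\<bar>}
           \<le> (\<Sum>i\<in>I. (w i)\<^sup>2 * (\<delta>\<^sup>2 + A\<^sup>2 * prob {\<omega>\<in>space M. \<delta> < \<bar>Z i \<omega>\<bar>})) / a\<^sup>2"
proof -
  have Z_meas: "Z i \<in> borel_measurable M" if "i \<in> I" for i
    using indep that unfolding indep_vars_def by auto
  have T_indep: "indep_vars (\<lambda>_. borel) T I"
    unfolding T_def by (rule indep_vars_compose2[OF indep]) measurable
  have T_sq_int: "integrable M (\<lambda>\<omega>. (T i \<omega>)\<^sup>2)" if "i \<in> I" for i
    using integrable_truncate_at[OF Z_meas[OF that]] integrable_square_truncate_at[OF Z_meas[OF that]]
    by (simp add: T_def power2_diff)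
  have T_mean: "expectation (T i) = 0" if "i \<in> I" for i
    using integrable_truncate_at[OF Z_meas[OF that]] by (simp add: T_def prob_space)
  have "prob {\<omega>\<in>space M. a \<le> \<bar>\<Sum>i\<in>I. w i * T i \<omega>\<bar>}
      \<le> (\<Sum>i\<in>I. (w i)\<^sup>2 * expectation (\<lambda>\<omega>. (T i \<omega>)\<^sup>2)) / a\<^sup>2"
    by (rule prob_abs_sum_indep_ge_le[OF \<open>finite I\<close> T_indep T_sq_int T_mean \<open>0 < a\<close>])
  also have "\<dots> \<le> (\<Sum>i\<in>I. (w i)\<^sup>2 * (\<delta>\<^sup>2 + A\<^sup>2 * prob {\<omega>\<in>space M. \<delta> < \<bar>Z i \<omega>\<bar>})) / a\<^sup>2"
    using variance_truncate_at_le[OF Z_meas]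
    by (intro divide_right_mono sum_mono mult_left_mono) (simp_all add: T_def)
  finally show ?thesis .
qed

lemma (in prob_space) prob_abs_sum_centered_tail_ge_le:
  fixes Z :: "'i \<Rightarrow> 'a \<Rightarrow> real" and A :: real
  assumes int: "\<And>i. i \<in> I \<Longrightarrow> integrable M (Z i)" and "0 < a"
  defines "V \<equiv> \<lambda>i \<omega>. (Z i \<omega> - truncate_at A (Z i \<omega>)) - expectation (\<lambda>\<omega>. Z i \<omega> - truncate_at A (Z i \<omega>))"
  shows "prob {\<omega>\<in>space M. a \<le> \<bar>\<Sum>i\<in>I. w i * V i \<omega>\<bar>}
           \<le> 2 * (\<Sum>i\<in>I. \<bar>w i\<bar> * expectation (\<lambda>\<omega>. \<bar>Z i \<omega>\<bar> * indicator {\<omega>. A < \<bar>Z i \<omega>\<bar>} \<omega>)) / a"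
proof -
  have tail_int: "integrable M (\<lambda>\<omega>. Z i \<omega> - truncate_at A (Z i \<omega>))" if "i \<in> I" for i
    using int[OF that] integrable_truncate_at[of "Z i" A] by auto
  have "prob {\<omega>\<in>space M. a \<le> \<bar>\<Sum>i\<in>I. w i * V i \<omega>\<bar>}
      \<le> (\<Sum>i\<in>I. \<bar>w i\<bar> * expectation (\<lambda>\<omega>. \<bar>V i \<omega>\<bar>)) / a"
    using tail_int \<open>0 < a\<close> by (intro prob_abs_sum_ge_le) (auto simp: V_def)
  also have "\<dots> \<le> (\<Sum>i\<in>I. \<bar>w i\<bar> * (2 * expectation (\<lambda>\<omega>. \<bar>Z i \<omega> - truncate_at A (Z i \<omega>)\<bar>))) / a"
    using expectation_abs_centered_le[OF tail_int] \<open>0 < a\<close>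
    by (intro divide_right_mono sum_mono mult_left_mono) (simp_all add: V_def)
  also have "\<dots> = 2 * (\<Sum>i\<in>I. \<bar>w i\<bar> * expectation (\<lambda>\<omega>. \<bar>Z i \<omega>\<bar> * indicator {\<omega>. A < \<bar>Z i \<omega>\<bar>} \<omega>)) / a"
    by (simp add: abs_diff_truncate_at indicator_def sum_distrib_left mult.left_commute)
  finally show ?thesis .
qed

lemma (in prob_space) prob_abs_weighted_sum_gt_le:
  fixes Z :: "'i \<Rightarrow> 'a \<Rightarrow> real" and A :: real
  assumes "finite I" and indep: "indep_vars (\<lambda>_. borel) Z I"
    and int: "\<And>i. i \<in> I \<Longrightarrow> integrable M (Z i)"
    and mean: "\<And>i. i \<in> I \<Longrightarrow> expectation (Z i) = 0"
    and "0 < \<epsilon>"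
  shows "prob {\<omega>\<in>space M. \<epsilon> < \<bar>\<Sum>i\<in>I. w i * Z i \<omega>\<bar>}
     \<le> 4 / \<epsilon>\<^sup>2 * (\<Sum>i\<in>I. (w i)\<^sup>2 * (\<delta>\<^sup>2 + A\<^sup>2 * prob {\<omega>\<in>space M. \<delta> < \<bar>Z i \<omega>\<bar>}))
       + 4 / \<epsilon> * (\<Sum>i\<in>I. \<bar>w i\<bar> * expectation (\<lambda>\<omega>. \<bar>Z i \<omega>\<bar> * indicator {\<omega>. A < \<bar>Z i \<omega>\<bar>} \<omega>))"
proof -
  define T where "T i \<omega> = truncate_at A (Z i \<omega>) - expectation (\<lambda>\<omega>. truncate_at A (Z i \<omega>))" for i \<omega>
  define V where "V i \<omega> = (Z i \<omega> - truncate_at A (Z i \<omega>))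
    - expectation (\<lambda>\<omega>. Z i \<omega> - truncate_at A (Z i \<omega>))" for i \<omega>
  have Z_meas [measurable]: "Z i \<in> borel_measurable M" if "i \<in> I" for i
    using int[OF that] by simp
  have "Z i \<omega> = T i \<omega> + V i \<omega>" if "i \<in> I" for i \<omega>
    using int[OF that] integrable_truncate_at[OF Z_meas[OF that]] mean[OF that]
    by (simp add: T_def V_def)
  then have sum_Z: "(\<Sum>i\<in>I. w i * Z i \<omega>) = (\<Sum>i\<in>I. w i * T i \<omega>) + (\<Sum>i\<in>I. w i * V i \<omega>)" for \<omega>
    by (simp add: distrib_left sum.distrib[symmetric] cong: sum.cong)
  have [measurable]: "T i \<in> borel_measurable M" "V i \<in> borel_measurable M" if "i \<in> I" for i
    using that unfolding T_def[abs_def] V_def[abs_def] by measurable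
  have "prob {\<omega>\<in>space M. \<epsilon> < \<bar>\<Sum>i\<in>I. w i * Z i \<omega>\<bar>}
      \<le> prob {\<omega>\<in>space M. \<epsilon> / 2 \<le> \<bar>\<Sum>i\<in>I. w i * T i \<omega>\<bar>}
        + prob {\<omega>\<in>space M. \<epsilon> / 2 \<le> \<bar>\<Sum>i\<in>I. w i * V i \<omega>\<bar>}"
    unfolding sum_Z by (rule measure_abs_add_gt_le) auto
  also have "\<dots> \<le> (\<Sum>i\<in>I. (w i)\<^sup>2 * (\<delta>\<^sup>2 + A\<^sup>2 * prob {\<omega>\<in>space M. \<delta> < \<bar>Z i \<omega>\<bar>})) / (\<epsilon> / 2)\<^sup>2
      + 2 * (\<Sum>i\<in>I. \<bar>w i\<bar> * expectation (\<lambda>\<omega>. \<bar>Z i \<omega>\<bar> * indicator {\<omega>. A < \<bar>Z i \<omega>\<bar>} \<omega>)) / (\<epsilon> / 2)"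
    unfolding T_def V_def using \<open>0 < \<epsilon>\<close>
    by (intro add_mono prob_abs_sum_centered_truncation_ge_le[OF \<open>finite I\<close> indep]
        prob_abs_sum_centered_tail_ge_le int) auto
  also have "\<dots> = 4 / \<epsilon>\<^sup>2 * (\<Sum>i\<in>I. (w i)\<^sup>2 * (\<delta>\<^sup>2 + A\<^sup>2 * prob {\<omega>\<in>space M. \<delta> < \<bar>Z i \<omega>\<bar>}))
       + 4 / \<epsilon> * (\<Sum>i\<in>I. \<bar>w i\<bar> * expectation (\<lambda>\<omega>. \<bar>Z i \<omega>\<bar> * indicator {\<omega>. A < \<bar>Z i \<omega>\<bar>} \<omega>))"
    by (simp add: power_divide)
  finally show ?thesis .
qed

lemma sum_square_weights_le:
  fixes m p :: "'i \<Rightarrow> real"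
  assumes "finite I" and m_nonneg: "\<And>i. i \<in> I \<Longrightarrow> 0 \<le> m i" and S_pos: "0 < (\<Sum>i\<in>I. m i)"
    and p_bounds: "\<And>i. i \<in> I \<Longrightarrow> 0 \<le> p i \<and> p i \<le> 1"
    and p_small: "\<And>i. i \<in> I \<Longrightarrow> R \<le> m i \<Longrightarrow> p i \<le> \<eta>"
    and "0 \<le> R" and "0 \<le> \<eta>"
  shows "(\<Sum>i\<in>I. (m i / (\<Sum>j\<in>I. m j))\<^sup>2 * p i) \<le> \<eta> + R / (\<Sum>j\<in>I. m j)"
proof -
  define S where "S = (\<Sum>j\<in>I. m j)"
  define w where "w i = m i / S" for i
  have "0 < S"
    using S_pos by (simp add: S_def)
  have w_bounds: "0 \<le> w i \<and> w i \<le> 1" if "i \<in> I" for i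
    using that m_nonneg \<open>0 < S\<close> member_le_sum[of i I m] \<open>finite I\<close> by (simp add: w_def S_def)
  have "(w i)\<^sup>2 * p i \<le> w i * (\<eta> + R / S)" if "i \<in> I" for i
  proof (cases "R \<le> m i")
    case True
    have "(w i)\<^sup>2 * p i \<le> w i * p i"
      using w_bounds[OF that] p_bounds[OF that]
      by (simp add: power2_eq_square mult.assoc mult_left_le_one_le)
    also have "\<dots> \<le> w i * (\<eta> + R / S)"
      using w_bounds[OF that] p_small[OF that True] \<open>0 \<le> R\<close> \<open>0 < S\<close>
      by (intro mult_left_mono add_increasing2) auto
    finally show ?thesis .
  next
    case False
    have "(w i)\<^sup>2 * p i \<le> w i * w i"
      using w_bounds[OF that] p_bounds[OF that] by (simp add: power2_eq_square mult_left_le)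
    also have "\<dots> \<le> w i * (\<eta> + R / S)"
      using w_bounds[OF that] False \<open>0 \<le> \<eta>\<close> \<open>0 < S\<close>
      by (intro mult_left_mono add_increasing) (auto simp: w_def divide_right_mono)
    finally show ?thesis .
  qed
  then have "(\<Sum>i\<in>I. (w i)\<^sup>2 * p i) \<le> (\<Sum>i\<in>I. w i * (\<eta> + R / S))"
    by (rule sum_mono)
  also have "\<dots> = \<eta> + R / S"
    using \<open>0 < S\<close> by (simp add: w_def sum_distrib_right[symmetric] sum_divide_distrib[symmetric] S_def)
  finally show ?thesis
    by (simp add: w_def S_def)
qed

lemma (in prob_space) prob_weighted_average_gt_le:
  fixes Z :: "'i \<Rightarrow> 'a \<Rightarrow> real" and m :: "'i \<Rightarrow> real" and A :: real
  assumes "finite I" "I \<noteq> {}" and indep: "indep_vars (\<lambda>_. borel) Z I"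
    and int: "\<And>i. i \<in> I \<Longrightarrow> integrable M (Z i)"
    and mean: "\<And>i. i \<in> I \<Longrightarrow> expectation (Z i) = 0"
    and m_pos: "\<And>i. i \<in> I \<Longrightarrow> 0 < m i"
    and tail: "\<And>i. i \<in> I \<Longrightarrow> expectation (\<lambda>\<omega>. \<bar>Z i \<omega>\<bar> * indicator {\<omega>. A < \<bar>Z i \<omega>\<bar>} \<omega>) \<le> c"
    and small: "\<And>i. i \<in> I \<Longrightarrow> R \<le> m i \<Longrightarrow> prob {\<omega>\<in>space M. \<delta> < \<bar>Z i \<omega>\<bar>} \<le> \<eta>"
    and "0 \<le> R" "0 \<le> \<eta>" "0 < \<epsilon>"
  shows "prob {\<omega>\<in>space M. \<epsilon> < \<bar>\<Sum>i\<in>I. m i / (\<Sum>j\<in>I. m j) * Z i \<omega>\<bar>}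
     \<le> 4 / \<epsilon>\<^sup>2 * (\<delta>\<^sup>2 + A\<^sup>2 * (\<eta> + R / (\<Sum>j\<in>I. m j))) + 4 / \<epsilon> * c"
proof -
  define S where "S = (\<Sum>j\<in>I. m j)"
  define p where "p i = prob {\<omega>\<in>space M. \<delta> < \<bar>Z i \<omega>\<bar>}" for i
  have "0 < S"
    unfolding S_def using \<open>finite I\<close> \<open>I \<noteq> {}\<close> m_pos by (intro sum_pos)
  have w_nonneg: "0 \<le> m i / S" if "i \<in> I" for i
    using m_pos[OF that] \<open>0 < S\<close> by simp
  have "(\<Sum>i\<in>I. (m i / S)\<^sup>2 * (\<delta>\<^sup>2 + A\<^sup>2 * p i))
      = \<delta>\<^sup>2 * (\<Sum>i\<in>I. (m i / S)\<^sup>2 * 1) + A\<^sup>2 * (\<Sum>i\<in>I. (m i / S)\<^sup>2 * p i)"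
    by (simp add: sum_distrib_left sum.distrib algebra_simps)
  \<comment> \<open>\<open>sum_square_weights_le\<close> with p = 1 and R = 0 bounds the sum of squared weights\<close>
  also have "\<dots> \<le> \<delta>\<^sup>2 * (1 + 0 / S) + A\<^sup>2 * (\<eta> + R / S)"
    using \<open>finite I\<close> m_pos \<open>0 < S\<close> small \<open>0 \<le> R\<close> \<open>0 \<le> \<eta>\<close>
    unfolding S_def p_def
    by (intro add_mono mult_left_mono sum_square_weights_le) (auto simp: less_imp_le)
  finally have bounded_part: "(\<Sum>i\<in>I. (m i / S)\<^sup>2 * (\<delta>\<^sup>2 + A\<^sup>2 * p i)) \<le> \<delta>\<^sup>2 + A\<^sup>2 * (\<eta> + R / S)"
    by simp
  have "(\<Sum>i\<in>I. \<bar>m i / S\<bar> * expectation (\<lambda>\<omega>. \<bar>Z i \<omega>\<bar> * indicator {\<omega>. A < \<bar>Z i \<omega>\<bar>} \<omega>))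
      \<le> (\<Sum>i\<in>I. m i / S * c)"
  proof (rule sum_mono)
    fix i assume "i \<in> I"
    then show "\<bar>m i / S\<bar> * expectation (\<lambda>\<omega>. \<bar>Z i \<omega>\<bar> * indicator {\<omega>. A < \<bar>Z i \<omega>\<bar>} \<omega>) \<le> m i / S * c"
      using mult_left_mono[OF tail w_nonneg] m_pos[of i] \<open>0 < S\<close> by simp
  qed
  also have "\<dots> = c"
    using \<open>0 < S\<close> by (simp add: S_def sum_distrib_right[symmetric] sum_divide_distrib[symmetric])
  finally have tail_part: "(\<Sum>i\<in>I. \<bar>m i / S\<bar> * expectation (\<lambda>\<omega>. \<bar>Z i \<omega>\<bar> * indicator {\<omega>. A < \<bar>Z i \<omega>\<bar>} \<omega>)) \<le> c" .
  have "prob {\<omega>\<in>space M. \<epsilon> < \<bar>\<Sum>i\<in>I. m i / S * Z i \<omega>\<bar>}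
      \<le> 4 / \<epsilon>\<^sup>2 * (\<Sum>i\<in>I. (m i / S)\<^sup>2 * (\<delta>\<^sup>2 + A\<^sup>2 * p i))
        + 4 / \<epsilon> * (\<Sum>i\<in>I. \<bar>m i / S\<bar> * expectation (\<lambda>\<omega>. \<bar>Z i \<omega>\<bar> * indicator {\<omega>. A < \<bar>Z i \<omega>\<bar>} \<omega>))"
    unfolding p_def by (rule prob_abs_weighted_sum_gt_le[OF \<open>finite I\<close> indep int mean \<open>0 < \<epsilon>\<close>])
  also have "\<dots> \<le> 4 / \<epsilon>\<^sup>2 * (\<delta>\<^sup>2 + A\<^sup>2 * (\<eta> + R / S)) + 4 / \<epsilon> * c"
    using bounded_part tail_part \<open>0 < \<epsilon>\<close> by (intro add_mono mult_left_mono) auto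
  finally show ?thesis
    by (simp add: S_def)
qed

lemma (in prob_space) eventually_prob_weighted_average_gt_less:
  fixes Z :: "nat \<Rightarrow> 'a \<Rightarrow> real" and m :: "nat \<Rightarrow> real" and A :: real
  assumes indep: "indep_vars (\<lambda>_. borel) Z {1..}"
    and int: "\<And>k. 1 \<le> k \<Longrightarrow> integrable M (Z k)"
    and mean: "\<And>k. 1 \<le> k \<Longrightarrow> expectation (Z k) = 0"
    and tail: "\<And>k. 1 \<le> k \<Longrightarrow> expectation (\<lambda>\<omega>. \<bar>Z k \<omega>\<bar> * indicator {\<omega>. A < \<bar>Z k \<omega>\<bar>} \<omega>) \<le> c"
    and small: "\<And>k. 1 \<le> k \<Longrightarrow> R \<le> m k \<Longrightarrow> prob {\<omega>\<in>space M. \<delta> < \<bar>Z k \<omega>\<bar>} \<le> \<eta>"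
    and m_pos: "\<And>k. 1 \<le> k \<Longrightarrow> 0 < m k"
    and m_div: "filterlim (\<lambda>n. \<Sum>k=1..n. m k) at_top sequentially"
    and "0 \<le> R" "0 \<le> \<eta>" "0 < \<epsilon>"
    and bound_less: "4 / \<epsilon>\<^sup>2 * (\<delta>\<^sup>2 + A\<^sup>2 * \<eta>) + 4 / \<epsilon> * c < b"
  shows "\<forall>\<^sub>F n in sequentially. prob {\<omega>\<in>space M. \<epsilon> < \<bar>\<Sum>k=1..n. m k / (\<Sum>j=1..n. m j) * Z k \<omega>\<bar>} < b"
proof -
  define bound where "bound n = 4 / \<epsilon>\<^sup>2 * (\<delta>\<^sup>2 + A\<^sup>2 * (\<eta> + R / (\<Sum>j=1..n. m j))) + 4 / \<epsilon> * c" for n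
  have "(bound \<longlongrightarrow> 4 / \<epsilon>\<^sup>2 * (\<delta>\<^sup>2 + A\<^sup>2 * (\<eta> + 0)) + 4 / \<epsilon> * c) sequentially"
    unfolding bound_def
    by (intro tendsto_intros tendsto_divide_0[OF tendsto_const] filterlim_at_top_imp_at_infinity m_div)
  then have "\<forall>\<^sub>F n in sequentially. bound n < b"
    using bound_less by (intro order_tendstoD(2)) auto
  then show ?thesis
    using eventually_ge_at_top[of 1]
  proof (eventually_elim)
    case (elim n)
    have "prob {\<omega>\<in>space M. \<epsilon> < \<bar>\<Sum>k=1..n. m k / (\<Sum>j=1..n. m j) * Z k \<omega>\<bar>} \<le> bound n"
      unfolding bound_def using elim \<open>0 < \<epsilon>\<close> \<open>0 \<le> R\<close> \<open>0 \<le> \<eta>\<close> tail small int mean m_pos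
      by (intro prob_weighted_average_gt_le indep_vars_subset[OF indep]) auto
    with elim show ?case
      by simp
  qed
qed

lemma (in prob_space) prob_weighted_average_gt_tendsto_0:
  fixes Z :: "nat \<Rightarrow> 'a \<Rightarrow> real" and m :: "nat \<Rightarrow> real"
  assumes indep: "indep_vars (\<lambda>_. borel) Z {1..}"
    and int: "\<And>k. 1 \<le> k \<Longrightarrow> integrable M (Z k)"
    and mean: "\<And>k. 1 \<le> k \<Longrightarrow> expectation (Z k) = 0"
    and unif_int: "\<And>c. 0 < c \<Longrightarrow>
      \<exists>A. \<forall>k\<ge>1. expectation (\<lambda>\<omega>. \<bar>Z k \<omega>\<bar> * indicator {\<omega>. A < \<bar>Z k \<omega>\<bar>} \<omega>) \<le> c"
    and small: "\<And>\<delta> \<eta>. 0 < \<delta> \<Longrightarrow> 0 < \<eta> \<Longrightarrow>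
      \<exists>R. \<forall>k\<ge>1. R \<le> m k \<longrightarrow> prob {\<omega>\<in>space M. \<delta> < \<bar>Z k \<omega>\<bar>} \<le> \<eta>"
    and m_pos: "\<And>k. 1 \<le> k \<Longrightarrow> 0 < m k"
    and m_div: "filterlim (\<lambda>n. \<Sum>k=1..n. m k) at_top sequentially"
    and "0 < \<epsilon>"
  shows "((\<lambda>n. prob {\<omega>\<in>space M. \<epsilon> < \<bar>\<Sum>k=1..n. m k / (\<Sum>j=1..n. m j) * Z k \<omega>\<bar>}) \<longlongrightarrow> 0)
           sequentially"
proof (rule order_tendstoI)
  show "\<forall>\<^sub>F n in sequentially. x < prob {\<omega>\<in>space M. \<epsilon> < \<bar>\<Sum>k=1..n. m k / (\<Sum>j=1..n. m j) * Z k \<omega>\<bar>}"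
    if "x < 0" for x
    using that by (intro always_eventually allI) (simp add: less_le_trans[OF _ measure_nonneg])
next
  fix \<eta> :: real assume "0 < \<eta>"
  obtain A where A: "\<And>k. 1 \<le> k \<Longrightarrow>
      expectation (\<lambda>\<omega>. \<bar>Z k \<omega>\<bar> * indicator {\<omega>. A < \<bar>Z k \<omega>\<bar>} \<omega>) \<le> \<epsilon> * \<eta> / 16"
    using unif_int[of "\<epsilon> * \<eta> / 16"] \<open>0 < \<epsilon>\<close> \<open>0 < \<eta>\<close> by auto
  define \<theta> where "\<theta> = \<epsilon>\<^sup>2 * \<eta> / 64"
  define \<delta> where "\<delta> = \<epsilon> * sqrt \<eta> / 8"
  define \<eta>' where "\<eta>' = \<theta> / (A\<^sup>2 + 1)"
  have "0 < A\<^sup>2 + 1" "0 < \<theta>"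
    using \<open>0 < \<epsilon>\<close> \<open>0 < \<eta>\<close> by (simp_all add: add_nonneg_pos \<theta>_def)
  have "0 < \<delta>" and "0 < \<eta>'"
    using \<open>0 < \<epsilon>\<close> \<open>0 < \<eta>\<close> \<open>0 < A\<^sup>2 + 1\<close> \<open>0 < \<theta>\<close> by (simp_all add: \<delta>_def \<eta>'_def)
  obtain R where "0 \<le> R"
    and R: "\<And>k. 1 \<le> k \<Longrightarrow> R \<le> m k \<Longrightarrow> prob {\<omega>\<in>space M. \<delta> < \<bar>Z k \<omega>\<bar>} \<le> \<eta>'"
  proof -
    obtain R0 where "\<forall>k\<ge>1. R0 \<le> m k \<longrightarrow> prob {\<omega>\<in>space M. \<delta> < \<bar>Z k \<omega>\<bar>} \<le> \<eta>'"
      using small \<open>0 < \<delta>\<close> \<open>0 < \<eta>'\<close> by blast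
    then show thesis
      using that[of "max R0 0"] by simp
  qed
  have "\<delta>\<^sup>2 = \<theta>"
    using \<open>0 < \<eta>\<close> by (simp add: \<delta>_def \<theta>_def power_mult_distrib power_divide)
  moreover have "A\<^sup>2 * \<eta>' \<le> \<theta>"
    using \<open>0 < A\<^sup>2 + 1\<close> \<open>0 < \<theta>\<close> unfolding \<eta>'_def by (simp add: divide_le_eq algebra_simps)
  ultimately have "4 / \<epsilon>\<^sup>2 * (\<delta>\<^sup>2 + A\<^sup>2 * \<eta>') + 4 / \<epsilon> * (\<epsilon> * \<eta> / 16) \<le> 3 / 8 * \<eta>"
    using \<open>0 < \<epsilon>\<close> by (simp add: \<theta>_def field_simps)
  also have "\<dots> < \<eta>"
    using \<open>0 < \<eta>\<close> by simp
  finally have bound_less: "4 / \<epsilon>\<^sup>2 * (\<delta>\<^sup>2 + A\<^sup>2 * \<eta>') + 4 / \<epsilon> * (\<epsilon> * \<eta> / 16) < \<eta>" .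
  show "\<forall>\<^sub>F n in sequentially.
      prob {\<omega>\<in>space M. \<epsilon> < \<bar>\<Sum>k=1..n. m k / (\<Sum>j=1..n. m j) * Z k \<omega>\<bar>} < \<eta>"
    using \<open>0 < \<eta>'\<close>
    by (intro eventually_prob_weighted_average_gt_less[OF indep int mean A R m_pos m_div \<open>0 \<le> R\<close> _
          \<open>0 < \<epsilon>\<close> bound_less]) auto
qed

lemma (in prob_space) uniform_tail_expectation_le:
  fixes X :: "'k \<Rightarrow> 'r \<Rightarrow> 'a \<Rightarrow> real"
  assumes lim: "((\<lambda>A. SUP (k, r)\<in>K \<times> R.
      \<integral>\<^sup>+ \<omega>. ennreal (\<bar>X k r \<omega>\<bar> * indicator {\<omega>. \<bar>X k r \<omega>\<bar> > A} \<omega>) \<partial>M) \<longlongrightarrow> 0) at_top"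
    and int: "\<And>k r. k \<in> K \<Longrightarrow> r \<in> R \<Longrightarrow> integrable M (X k r)" and "0 < c"
  shows "\<exists>A. \<forall>k\<in>K. \<forall>r\<in>R. expectation (\<lambda>\<omega>. \<bar>X k r \<omega>\<bar> * indicator {\<omega>. A < \<bar>X k r \<omega>\<bar>} \<omega>) \<le> c"
proof -
  obtain A where A: "(SUP (k, r)\<in>K \<times> R.
      \<integral>\<^sup>+ \<omega>. ennreal (\<bar>X k r \<omega>\<bar> * indicator {\<omega>. A < \<bar>X k r \<omega>\<bar>} \<omega>) \<partial>M) < ennreal c"
    using order_tendstoD(2)[OF lim, of "ennreal c"] \<open>0 < c\<close>
    unfolding eventually_at_top_linorder by (auto intro: order_refl)
  have "expectation (\<lambda>\<omega>. \<bar>X k r \<omega>\<bar> * indicator {\<omega>. A < \<bar>X k r \<omega>\<bar>} \<omega>) \<le> c"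
    if "k \<in> K" "r \<in> R" for k r
  proof -
    have [measurable]: "X k r \<in> borel_measurable M"
      using int[OF that] by simp
    have "integrable M (\<lambda>\<omega>. \<bar>X k r \<omega>\<bar> * indicator {\<omega>. A < \<bar>X k r \<omega>\<bar>} \<omega>)"
      by (intro Bochner_Integration.integrable_bound[OF int[OF that]]) (auto simp: indicator_def)
    then have "ennreal (expectation (\<lambda>\<omega>. \<bar>X k r \<omega>\<bar> * indicator {\<omega>. A < \<bar>X k r \<omega>\<bar>} \<omega>))
        = (\<integral>\<^sup>+ \<omega>. ennreal (\<bar>X k r \<omega>\<bar> * indicator {\<omega>. A < \<bar>X k r \<omega>\<bar>} \<omega>) \<partial>M)"
      by (intro nn_integral_eq_integral[symmetric]) auto
    also have "\<dots> < ennreal c"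
      using that by (intro order.strict_trans1[OF _ A] SUP_upper2[of "(k, r)"]) auto
    finally show ?thesis
      by (simp add: ennreal_less_iff integral_nonneg_AE less_imp_le)
  qed
  then show ?thesis
    by blast
qed

lemma (in prob_space) uniform_prob_le:
  fixes E :: "'k \<Rightarrow> 'r::linorder \<Rightarrow> 'a set"
  assumes lim: "((\<lambda>r. SUP k\<in>K. prob (E k r)) \<longlongrightarrow> 0) at_top" and "0 < \<eta>"
  shows "\<exists>R. \<forall>r\<ge>R. \<forall>k\<in>K. prob (E k r) \<le> \<eta>"
proof -
  obtain R where R: "\<And>r. R \<le> r \<Longrightarrow> (SUP k\<in>K. prob (E k r)) < \<eta>"
    using order_tendstoD(2)[OF lim \<open>0 < \<eta>\<close>] unfolding eventually_at_top_linorder by blast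
  have "prob (E k r) \<le> \<eta>" if "R \<le> r" "k \<in> K" for r k
    using cSUP_upper[OF \<open>k \<in> K\<close>, of "\<lambda>k. prob (E k r)"] R[OF \<open>R \<le> r\<close>]
    by (fastforce intro: bdd_aboveI[where M=1])
  then show ?thesis
    by blast
qed

lemma (in prob_space) indep_vars_evaluation:
  fixes X :: "'k \<Rightarrow> 'r \<Rightarrow> 'a \<Rightarrow> real"
  assumes indep: "indep_vars (\<lambda>_. PiM T (\<lambda>_. borel)) (\<lambda>k \<omega>. \<lambda>r\<in>T. X k r \<omega>) K"
    and "\<And>k. k \<in> K \<Longrightarrow> t k \<in> T"
  shows "indep_vars (\<lambda>_. borel) (\<lambda>k. X k (t k)) K"
proof -
  have "indep_vars (\<lambda>_. borel) (\<lambda>k \<omega>. (\<lambda>f. f (t k)) (\<lambda>r\<in>T. X k r \<omega>)) K"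
    using assms(2) by (intro indep_vars_compose2[OF indep]) auto
  also have "?this \<longleftrightarrow> indep_vars (\<lambda>_. borel) (\<lambda>k. X k (t k)) K"
    using assms(2) by (intro indep_vars_cong) (auto simp: fun_eq_iff)
  finally show ?thesis .
qed

theorem theorem2p1:
  fixes M :: "'a measure"
    and X :: "nat \<Rightarrow> real \<Rightarrow> 'a \<Rightarrow> real"
    and m :: "nat \<Rightarrow> real"
  assumes P: "prob_space M"
    and integ: "\<And>k r. k \<ge> 1 \<Longrightarrow> r > 0 \<Longrightarrow> integrable M (X k r)"
    and indep: "prob_space.indep_vars M (\<lambda>_. PiM {0<..} (\<lambda>_. borel))
                  (\<lambda>k \<omega>. \<lambda>r\<in>{0<..}. X k r \<omega>) {1..}"
    and C: "\<And>k r. k \<ge> 1 \<Longrightarrow> r > 0 \<Longrightarrow> prob_space.expectation M (X k r) = 0"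
    and W1: "\<And>\<epsilon>. \<epsilon> > 0 \<Longrightarrow>
              ((\<lambda>r. SUP k\<in>{1..}. measure M {\<omega> \<in> space M. \<bar>X k r \<omega>\<bar> > \<epsilon>}) \<longlongrightarrow> 0) at_top"
    and W2: "((\<lambda>A. SUP (k, r)\<in>{1..} \<times> {0<..}.
               \<integral>\<^sup>+ \<omega>. ennreal (\<bar>X k r \<omega>\<bar> * indicator {\<omega>. \<bar>X k r \<omega>\<bar> > A} \<omega>) \<partial>M)
              \<longlongrightarrow> 0) at_top"
    and mpos: "\<And>k. k \<ge> 1 \<Longrightarrow> m k > 0"
    and mdiv: "filterlim (\<lambda>n. \<Sum>k=1..n. m k) at_top sequentially"
  shows "\<And>\<epsilon>. \<epsilon> > 0 \<Longrightarrow>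
    ((\<lambda>n. measure M {\<omega> \<in> space M.
        \<bar>\<Sum>k=1..n. m k / (\<Sum>j=1..n. m j) * X k (m k) \<omega>\<bar> > \<epsilon>}) \<longlongrightarrow> 0) sequentially"
proof -
  interpret prob_space M by (rule P)
  fix \<epsilon> :: real assume "\<epsilon> > 0"
  have indep_Z: "indep_vars (\<lambda>_. borel) (\<lambda>k. X k (m k)) {1..}"
    using mpos by (intro indep_vars_evaluation[OF indep]) auto
  have int_Z: "integrable M (X k (m k))" and mean_Z: "expectation (X k (m k)) = 0" if "1 \<le> k" for k
    using integ C mpos that by auto
  have unif_int: "\<exists>A. \<forall>k\<ge>1. expectation (\<lambda>\<omega>. \<bar>X k (m k) \<omega>\<bar> * indicator {\<omega>. A < \<bar>X k (m k) \<omega>\<bar>} \<omega>) \<le> c"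
    if "0 < c" for c
    using uniform_tail_expectation_le[OF W2 integ \<open>0 < c\<close>] mpos
    unfolding atLeast_iff greaterThan_iff by blast
  have small: "\<exists>R. \<forall>k\<ge>1. R \<le> m k \<longrightarrow> prob {\<omega>\<in>space M. \<delta> < \<bar>X k (m k) \<omega>\<bar>} \<le> \<eta>"
    if "0 < \<delta>" "0 < \<eta>" for \<delta> \<eta>
    using uniform_prob_le[OF W1[OF \<open>0 < \<delta>\<close>] \<open>0 < \<eta>\<close>] unfolding atLeast_iff by blast
  show "((\<lambda>n. measure M {\<omega> \<in> space M.
        \<bar>\<Sum>k=1..n. m k / (\<Sum>j=1..n. m j) * X k (m k) \<omega>\<bar> > \<epsilon>}) \<longlongrightarrow> 0) sequentially"
    by (rule prob_weighted_average_gt_tendsto_0[OF indep_Z int_Z mean_Z unif_int small mpos mdiv \<open>\<epsilon> > 0\<close>])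
qed

end
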